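(* Let $R$ be a commutative unital ring, $\mathfrak{b}\subsetneq R$ a radical ideal, and $(I_k)_{k=1}^\infty$ countably many ideals of $R$. Suppose that for every $r\in R\setminus\mathfrak{b}$ and every $k\in\mathbb{N}$ there exists $x\in R$ such that $rx\notin\mathfrak{b}$ and $(1-a)x\in\mathfrak{b}$ for some $a\in I_k$. Then there exists a maximal ideal $\mathfrak{m}\subsetneq R$ such that $I_k\not\subseteq\mathfrak{m}$ for all $k\in\mathbb{N}$. *)

theory Defs
  imports "HOL-Algebra.Algebra"
begin

definition radical_ideal :: "'a set \<Rightarrow> ('a, 'b) ring_scheme \<Rightarrow> bool" where
  "radical_ideal b R \<longleftrightarrow> ideal b R \<and>
     (\<forall>x \<in> carrier R. \<forall>n::nat. n \<ge> 1 \<longrightarrow> x [^]\<^bsub>R\<^esub> n \<in> b \<longrightarrow> x \<in> b)"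

end

theory Submission
  imports Defs
begin

text \<open>
  From the hypothesis one builds, by dependent choice, elements \<open>s\<^sub>0\<close> and
  \<open>s\<^sub>k\<^sub>+\<^sub>1 = s\<^sub>k x\<^sub>k\<close> outside \<open>b\<close> together with \<open>a\<^sub>k \<in> I\<^sub>k\<close> such that
  \<open>(\<one> - a\<^sub>k) s\<^sub>k\<^sub>+\<^sub>1 \<in> b\<close>. Because each \<open>s\<^sub>n\<close> divides the next, the union
  \<open>J = {x. \<exists>n. x s\<^sub>n \<in> b}\<close> of the colon ideals \<open>b : s\<^sub>n\<close> is an ideal; it misses
  \<open>\<one>\<close> since no \<open>s\<^sub>n\<close> lies in \<open>b\<close>, and contains every \<open>\<one> - a\<^sub>k\<close>. A maximal ideal
  \<open>m \<supseteq> J\<close> then contains \<open>\<one> - a\<^sub>k\<close>, hence not \<open>a\<^sub>k\<close>, so \<open>I\<^sub>k \<not>\<subseteq> m\<close>.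
\<close>

lemma (in ring) ideal_extends_to_maximalideal:
  assumes "ideal J R" and "\<one> \<notin> J"
  shows "\<exists>M. maximalideal M R \<and> J \<subseteq> M"
proof -
  define \<A> where "\<A> = {K. ideal K R \<and> J \<subseteq> K \<and> \<one> \<notin> K}"
  have "\<exists>M\<in>\<A>. \<forall>K\<in>\<A>. M \<subseteq> K \<longrightarrow> K = M"
  proof (rule subset_Zorn_nonempty)
    show "\<A> \<noteq> {}"
      using assms by (auto simp: \<A>_def)
    fix \<C> assume "\<C> \<noteq> {}" and chain: "subset.chain \<A> \<C>"
    then have "subset.chain {K. ideal K R} \<C>"
      by (auto simp: \<A>_def pred_on.chain_def)
    then have "ideal (\<Union>\<C>) R"
      using chain_Union_is_ideal[of \<C>] \<open>\<C> \<noteq> {}\<close> by simp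
    with \<open>\<C> \<noteq> {}\<close> chain show "\<Union>\<C> \<in> \<A>"
      by (auto simp: \<A>_def pred_on.chain_def)
  qed
  then obtain M where M: "M \<in> \<A>" and M_max: "\<And>K. K \<in> \<A> \<Longrightarrow> M \<subseteq> K \<Longrightarrow> K = M"
    by blast
  have "maximalideal M R"
  proof (rule maximalidealI)
    show "ideal M R" and "carrier R \<noteq> M"
      using M by (auto simp: \<A>_def)
    fix K assume K: "ideal K R" "M \<subseteq> K" "K \<subseteq> carrier R"
    show "K = M \<or> K = carrier R"
      using K M_max[of K] M ideal.one_imp_carrier[OF K(1)] by (auto simp: \<A>_def)
  qed
  with M show ?thesis
    by (auto simp: \<A>_def)
qed

lemma (in monoid) divides_chain_mono:
  assumes "\<And>n. s n \<in> carrier G" and "\<And>n. s n divides s (Suc n)" and "n \<le> m"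
  shows "s n divides s m"
  using assms(3)
proof (induction m rule: dec_induct)
  case base
  show ?case
    using assms(1) by (rule divides_refl)
next
  case (step m)
  then show ?case
    using assms(1,2) divides_trans by blast
qed

lemma (in cring) ideal_Union_colon_divides_chain:
  assumes b: "ideal b R"
    and s: "\<And>n. s n \<in> carrier R" and chain: "\<And>n. s n divides s (Suc n)"
  shows "ideal {x \<in> carrier R. \<exists>n. x \<otimes> s n \<in> b} R" (is "ideal ?J R")
proof -
  interpret b: ideal b R by fact
  have mono: "x \<otimes> s m \<in> b" if "x \<in> carrier R" "x \<otimes> s n \<in> b" "n \<le> m" for x n m
  proof -
    obtain c where c: "c \<in> carrier R" "s m = s n \<otimes> c"
      using divides_chain_mono[of s, OF s chain \<open>n \<le> m\<close>] by (auto simp: factor_def)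
    then have "x \<otimes> s m = (x \<otimes> s n) \<otimes> c"
      using that(1) s by (simp add: m_assoc)
    then show ?thesis
      using b.I_r_closed[OF that(2) c(1)] by simp
  qed
  have add: "x \<oplus> y \<in> ?J" if "x \<in> ?J" "y \<in> ?J" for x y
  proof -
    from that obtain n m where "x \<in> carrier R" "y \<in> carrier R" "x \<otimes> s n \<in> b" "y \<otimes> s m \<in> b"
      by blast
    then have "x \<otimes> s (max n m) \<oplus> y \<otimes> s (max n m) \<in> b"
      using mono by (simp add: b.a_closed)
    then have "(x \<oplus> y) \<otimes> s (max n m) \<in> b"
      using \<open>x \<in> carrier R\<close> \<open>y \<in> carrier R\<close> s by (simp add: l_distr)
    with \<open>x \<in> carrier R\<close> \<open>y \<in> carrier R\<close> show ?thesis
      by blast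
  qed
  have neg: "\<ominus> x \<in> ?J" if "x \<in> ?J" for x
  proof -
    from that obtain n where "x \<in> carrier R" "x \<otimes> s n \<in> b"
      by blast
    then have "(\<ominus> x) \<otimes> s n \<in> b"
      using s b.a_inv_closed by (simp add: l_minus)
    with \<open>x \<in> carrier R\<close> show ?thesis
      by blast
  qed
  have mult: "x \<otimes> y \<in> ?J" if "x \<in> ?J" "y \<in> carrier R" for x y
  proof -
    from that obtain n where "x \<in> carrier R" "x \<otimes> s n \<in> b"
      by blast
    then have "(x \<otimes> y) \<otimes> s n \<in> b"
      using b.I_l_closed[of "x \<otimes> s n" y] that(2) s by (simp add: m_lcomm m_comm)
    with \<open>x \<in> carrier R\<close> that(2) show ?thesis
      by blast
  qed
  have zero: "\<zero> \<in> ?J"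
    using s by auto
  show ?thesis
  proof (rule idealI)
    show "subgroup ?J (add_monoid R)"
      using add neg zero by (intro add.subgroupI) (auto simp: a_inv_def[symmetric])
  qed (use mult m_comm ring_axioms in auto)
qed

lemma (in cring) maximalideal_not_containing_ideals:
  assumes b: "ideal b R"
    and s: "\<And>n. s n \<in> carrier R - b" and chain: "\<And>n. s n divides s (Suc n)"
    and I: "\<And>k. I k \<subseteq> carrier R"
    and unit_mod_I: "\<And>k. \<exists>a \<in> I k. \<exists>n. (\<one> \<ominus> a) \<otimes> s n \<in> b"
  shows "\<exists>m. maximalideal m R \<and> (\<forall>k. \<not> I k \<subseteq> m)"
proof -
  let ?J = "{x \<in> carrier R. \<exists>n. x \<otimes> s n \<in> b}"
  have "ideal ?J R"
    using ideal_Union_colon_divides_chain[OF b] s chain by blast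
  moreover have "\<one> \<notin> ?J"
    using s by auto
  ultimately obtain m where m: "maximalideal m R" "?J \<subseteq> m"
    using ideal_extends_to_maximalideal by blast
  interpret m: maximalideal m R by (fact m(1))
  have "\<not> I k \<subseteq> m" for k
  proof
    assume "I k \<subseteq> m"
    obtain a n where a: "a \<in> I k" "(\<one> \<ominus> a) \<otimes> s n \<in> b"
      using unit_mod_I by blast
    with I have "a \<in> carrier R"
      by blast
    with a m(2) have "\<one> \<ominus> a \<in> m"
      by auto
    with \<open>I k \<subseteq> m\<close> a(1) have "(\<one> \<ominus> a) \<oplus> a \<in> m"
      using m.a_closed by blast
    with \<open>a \<in> carrier R\<close> have "\<one> \<in> m"
      by (simp add: a_minus_def a_assoc l_neg)
    then show False
      using m.one_imp_carrier m.I_notcarr by simp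
  qed
  with m(1) show ?thesis
    by blast
qed

lemma (in cring) divides_chain_outside_ideal:
  assumes b: "ideal b R" "\<one> \<notin> b"
    and I: "\<And>k. I k \<subseteq> carrier R"
    and step: "\<And>r k. r \<in> carrier R - b \<Longrightarrow>
      \<exists>x \<in> carrier R. r \<otimes> x \<notin> b \<and> (\<exists>a \<in> I k. (\<one> \<ominus> a) \<otimes> x \<in> b)"
  shows "\<exists>s. \<forall>k. s k \<in> carrier R - b \<and> s k divides s (Suc k) \<and>
    (\<exists>a \<in> I k. (\<one> \<ominus> a) \<otimes> s (Suc k) \<in> b)"
proof (rule dependent_nat_choice)
  show "\<exists>r. r \<in> carrier R - b"
    using b(2) by blast
  fix r k assume r: "r \<in> carrier R - b"
  then obtain x a where x: "x \<in> carrier R" "r \<otimes> x \<notin> b" and a: "a \<in> I k" "(\<one> \<ominus> a) \<otimes> x \<in> b"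
    using step by blast
  have "\<one> \<ominus> a \<in> carrier R"
    using a(1) I by (auto intro: minus_closed)
  then have "(\<one> \<ominus> a) \<otimes> (r \<otimes> x) = r \<otimes> ((\<one> \<ominus> a) \<otimes> x)"
    using r x(1) by (simp add: m_lcomm)
  also have "\<dots> \<in> b"
    using a(2) r ideal.I_l_closed[OF b(1)] by blast
  finally show "\<exists>y. y \<in> carrier R - b \<and> r divides y \<and> (\<exists>a \<in> I k. (\<one> \<ominus> a) \<otimes> y \<in> b)"
    using r x a(1) by (intro exI[of _ "r \<otimes> x"]) (auto simp: factor_def)
qed

theorem mainTheorem19:
  fixes R :: "('a, 'b) ring_scheme" (structure)
    and b :: "'a set"
    and I :: "nat \<Rightarrow> 'a set"
  assumes "cring R"
    and "radical_ideal b R"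
    and "b \<noteq> carrier R"
    and "\<And>k. ideal (I k) R"
    and "\<And>r k. r \<in> carrier R - b \<Longrightarrow>
           \<exists>x \<in> carrier R. r \<otimes> x \<notin> b \<and> (\<exists>a \<in> I k. (\<one> \<ominus> a) \<otimes> x \<in> b)"
  shows "\<exists>m. maximalideal m R \<and> (\<forall>k. \<not> I k \<subseteq> m)"
proof -
  interpret cring R by fact
  have b: "ideal b R"
    using assms(2) by (simp add: radical_ideal_def)
  then have "\<one> \<notin> b"
    using ideal.one_imp_carrier assms(3) by auto
  have I: "I k \<subseteq> carrier R" for k
    using ideal.Icarr[OF assms(4)] by blast
  from divides_chain_outside_ideal[OF b \<open>\<one> \<notin> b\<close> I assms(5)]
  obtain s where s: "\<forall>k. s k \<in> carrier R - b \<and> s k divides s (Suc k) \<and>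
      (\<exists>a \<in> I k. (\<one> \<ominus> a) \<otimes> s (Suc k) \<in> b)" ..
  show ?thesis
  proof (rule maximalideal_not_containing_ideals[OF b _ _ I])
    show "s n \<in> carrier R - b" and "s n divides s (Suc n)" for n
      using s by blast+
    show "\<exists>a \<in> I k. \<exists>n. (\<one> \<ominus> a) \<otimes> s n \<in> b" for k
      using s by blast
  qed
qed

end
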